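(* Let $F,G\colon\mathbb A^{op}\times\mathbb A\to\mathbb B$ and $H,K\colon\mathbb B^{op}\times\mathbb B\to\mathbb C$ be functors and $\phi\colon F\to G$, $\psi\colon H\to K$ dinatural transformations of type $2\to1\leftarrow2$. Then the horizontal composite $\phi\ast\psi$ is a dinatural transformation $H(G^{op},F)\to K(F^{op},G)$ of type $4\to1\leftarrow4$, where $H(G^{op},F),K(F^{op},G)\colon\mathbb A^{[+,-,-,+]}\to\mathbb C$ are given on objects by $(A,B,C,D)\mapsto H(G(A,B),F(C,D))$ and $(A,B,C,D)\mapsto K(F(A,B),G(C,D))$ and similarly on morphisms.
   Context: A dinatural transformation $\phi\colon F\to G$ of type $2\to1\leftarrow2$ between functors $F,G\colon\mathbb A^{op}\times\mathbb A\to\mathbb B$ is a family $\phi_A\colon F(A,A)\to G(A,A)$ such that for every $f\colon A\to A'$, $G(1_A,f)\circ\phi_A\circ F(f,1_A)=G(f,1_{A'})\circ\phi_{A'}\circ F(1_{A'},f)$. A transformation of type $4\to1\leftarrow4$ between functors $\mathbb A^{[+,-,-,+]}=\mathbb A\times\mathbb A^{op}\times\mathbb A^{op}\times\mathbb A\to\mathbb C$ is a family indexed by one object $A$ with components between the functors evaluated at $(A,A,A,A)$; it is dinatural if for every $f\colon A\to A'$ the hexagon obtained by applying the domain functor to $f$ in its covariant arguments ($1,4$) or contravariant arguments ($2,3$) and the codomain functor dually commutes, exactly as in the two-argument case. Horizontal composite: $\phi\ast\psi$ is the family with components $(\phi\ast\psi)_A\colon H(G(A,A),F(A,A))\to K(F(A,A),G(A,A))$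 given by $(\phi\ast\psi)_A=K(1_{F(A,A)},\phi_A)\circ\psi_{F(A,A)}\circ H(\phi_A,1_{F(A,A)})$, which equals $K(\phi_A,1_{G(A,A)})\circ\psi_{G(A,A)}\circ H(1_{G(A,A)},\phi_A)$ by dinaturality of $\psi$. *)

theory Defs
  imports Main
begin

text \<open>Categories given explicitly by objects, arrows, domain, codomain, identities
  and composition (Comp C g f is g after f).\<close>

record ('o, 'm) cat =
  Ob :: "'o set"
  Ar :: "'m set"
  Dom :: "'m \<Rightarrow> 'o"
  Cod :: "'m \<Rightarrow> 'o"
  Id :: "'o \<Rightarrow> 'm"
  Comp :: "'m \<Rightarrow> 'm \<Rightarrow> 'm"

definition hom :: "('o, 'm) cat \<Rightarrow> 'o \<Rightarrow> 'o \<Rightarrow> 'm set" where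
  "hom C a b = {f \<in> Ar C. Dom C f = a \<and> Cod C f = b}"

definition category :: "('o, 'm) cat \<Rightarrow> bool" where
  "category C \<longleftrightarrow>
     (\<forall>f\<in>Ar C. Dom C f \<in> Ob C \<and> Cod C f \<in> Ob C) \<and>
     (\<forall>a\<in>Ob C. Id C a \<in> hom C a a) \<and>
     (\<forall>f\<in>Ar C. \<forall>g\<in>Ar C. Cod C f = Dom C g \<longrightarrow> Comp C g f \<in> hom C (Dom C f) (Cod C g)) \<and>
     (\<forall>f\<in>Ar C. Comp C (Id C (Cod C f)) f = f \<and> Comp C f (Id C (Dom C f)) = f) \<and>
     (\<forall>f\<in>Ar C. \<forall>g\<in>Ar C. \<forall>h\<in>Ar C. Cod C f = Dom C g \<longrightarrow> Cod C g = Dom C h \<longrightarrow>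
        Comp C h (Comp C g f) = Comp C (Comp C h g) f)"

definition opcat :: "('o, 'm) cat \<Rightarrow> ('o, 'm) cat" where
  "opcat C = \<lparr>Ob = Ob C, Ar = Ar C, Dom = Cod C, Cod = Dom C, Id = Id C,
              Comp = (\<lambda>g f. Comp C f g)\<rparr>"

definition prodcat :: "('o, 'm) cat \<Rightarrow> ('p, 'n) cat \<Rightarrow> ('o \<times> 'p, 'm \<times> 'n) cat" where
  "prodcat C D = \<lparr>Ob = Ob C \<times> Ob D, Ar = Ar C \<times> Ar D,
     Dom = (\<lambda>(f, g). (Dom C f, Dom D g)), Cod = (\<lambda>(f, g). (Cod C f, Cod D g)),
     Id = (\<lambda>(a, b). (Id C a, Id D b)),
     Comp = (\<lambda>(f', g') (f, g). (Comp C f' f, Comp D g' g))\<rparr>"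

definition "functor" :: "('o, 'm) cat \<Rightarrow> ('p, 'n) cat \<Rightarrow> ('o \<Rightarrow> 'p) \<Rightarrow> ('m \<Rightarrow> 'n) \<Rightarrow> bool" where
  "functor C D Fo Fa \<longleftrightarrow>
     (\<forall>a\<in>Ob C. Fo a \<in> Ob D) \<and>
     (\<forall>f\<in>Ar C. Fa f \<in> hom D (Fo (Dom C f)) (Fo (Cod C f))) \<and>
     (\<forall>a\<in>Ob C. Fa (Id C a) = Id D (Fo a)) \<and>
     (\<forall>f\<in>Ar C. \<forall>g\<in>Ar C. Cod C f = Dom C g \<longrightarrow> Fa (Comp C g f) = Comp D (Fa g) (Fa f))"

text \<open>The category A^op x A and A^[+,-,-,+] = A x A^op x A^op x A.\<close>
definition mixcat2 :: "('o, 'm) cat \<Rightarrow> ('o \<times> 'o, 'm \<times> 'm) cat" where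
  "mixcat2 A = prodcat (opcat A) A"

definition mixcat4 :: "('o, 'm) cat \<Rightarrow> ('o \<times> 'o \<times> 'o \<times> 'o, 'm \<times> 'm \<times> 'm \<times> 'm) cat" where
  "mixcat4 A = prodcat A (prodcat (opcat A) (prodcat (opcat A) A))"

definition dinat2 ::
  "('o, 'm) cat \<Rightarrow> ('p, 'n) cat \<Rightarrow> ('o \<times> 'o \<Rightarrow> 'p) \<Rightarrow> ('m \<times> 'm \<Rightarrow> 'n)
   \<Rightarrow> ('o \<times> 'o \<Rightarrow> 'p) \<Rightarrow> ('m \<times> 'm \<Rightarrow> 'n) \<Rightarrow> ('o \<Rightarrow> 'n) \<Rightarrow> bool" where
  "dinat2 A B Fo Fa Go Ga \<phi> \<longleftrightarrow>
     (\<forall>a\<in>Ob A. \<phi> a \<in> hom B (Fo (a, a)) (Go (a, a))) \<and>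
     (\<forall>f\<in>Ar A. let a = Dom A f; a' = Cod A f in
        Comp B (Ga (Id A a, f)) (Comp B (\<phi> a) (Fa (f, Id A a))) =
        Comp B (Ga (f, Id A a')) (Comp B (\<phi> a') (Fa (Id A a', f))))"

definition dinat4 ::
  "('o, 'm) cat \<Rightarrow> ('p, 'n) cat
   \<Rightarrow> ('o \<times> 'o \<times> 'o \<times> 'o \<Rightarrow> 'p) \<Rightarrow> ('m \<times> 'm \<times> 'm \<times> 'm \<Rightarrow> 'n)
   \<Rightarrow> ('o \<times> 'o \<times> 'o \<times> 'o \<Rightarrow> 'p) \<Rightarrow> ('m \<times> 'm \<times> 'm \<times> 'm \<Rightarrow> 'n) \<Rightarrow> ('o \<Rightarrow> 'n) \<Rightarrow> bool" where
  "dinat4 A C To Ta So Sa \<theta> \<longleftrightarrow>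
     (\<forall>a\<in>Ob A. \<theta> a \<in> hom C (To (a, a, a, a)) (So (a, a, a, a))) \<and>
     (\<forall>f\<in>Ar A. let a = Dom A f; a' = Cod A f in
        Comp C (Sa (f, Id A a, Id A a, f)) (Comp C (\<theta> a) (Ta (Id A a, f, f, Id A a))) =
        Comp C (Sa (Id A a', f, f, Id A a')) (Comp C (\<theta> a') (Ta (f, Id A a', Id A a', f))))"

definition mix_ob :: "('b \<times> 'b \<Rightarrow> 'c) \<Rightarrow> ('a \<times> 'a \<Rightarrow> 'b) \<Rightarrow> ('a \<times> 'a \<Rightarrow> 'b)
   \<Rightarrow> 'a \<times> 'a \<times> 'a \<times> 'a \<Rightarrow> 'c" where
  "mix_ob Ho Go Fo = (\<lambda>(a, b, c, d). Ho (Go (a, b), Fo (c, d)))"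

definition mix_ar :: "('g \<times> 'g \<Rightarrow> 'h) \<Rightarrow> ('f \<times> 'f \<Rightarrow> 'g) \<Rightarrow> ('f \<times> 'f \<Rightarrow> 'g)
   \<Rightarrow> 'f \<times> 'f \<times> 'f \<times> 'f \<Rightarrow> 'h" where
  "mix_ar Ha Ga Fa = (\<lambda>(f1, f2, f3, f4). Ha (Ga (f1, f2), Fa (f3, f4)))"

definition hcomp :: "('p, 'n) cat \<Rightarrow> ('q, 'k) cat \<Rightarrow> ('o \<times> 'o \<Rightarrow> 'p)
   \<Rightarrow> ('n \<times> 'n \<Rightarrow> 'k) \<Rightarrow> ('n \<times> 'n \<Rightarrow> 'k) \<Rightarrow> ('o \<Rightarrow> 'n) \<Rightarrow> ('p \<Rightarrow> 'k) \<Rightarrow> 'o \<Rightarrow> 'k" where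
  "hcomp B C Fo Ha Ka \<phi> \<psi> = (\<lambda>a.
     Comp C (Ka (Id B (Fo (a, a)), \<phi> a))
       (Comp C (\<psi> (Fo (a, a))) (Ha (\<phi> a, Id B (Fo (a, a))))))"

end

theory Submission
  imports Defs
begin

text \<open>For an arrow p : y \<rightarrow> g of \<open>\<bbbB>\<close>, let \<open>\<psi>\<^sub>p = K(1\<^sub>y, p) \<circ> \<psi>\<^sub>y \<circ> H(p, 1\<^sub>y) : H(g, y) \<rightarrow> K(y, g)\<close>,
  so that \<open>(\<phi> \<ast> \<psi>)\<^sub>A = \<psi>\<^bsub>\<phi>\<^sub>A\<^esub>\<close>. Bifunctoriality gives \<open>K(1, v) \<circ> \<psi>\<^sub>p \<circ> H(v, 1) = \<psi>\<^bsub>v p\<^esub>\<close> and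
  dinaturality of \<psi> gives \<open>K(u, 1) \<circ> \<psi>\<^sub>p \<circ> H(1, u) = \<psi>\<^bsub>p u\<^esub>\<close>. Hence both sides of the
  dinaturality hexagon of \<open>\<phi> \<ast> \<psi>\<close> at f : A \<rightarrow> A' are \<open>\<psi>\<^sub>q\<close> for the two sides q of the
  dinaturality hexagon of \<phi> at f, which agree.\<close>

lemma category_id_hom: "category C \<Longrightarrow> a \<in> Ob C \<Longrightarrow> Id C a \<in> hom C a a"
  by (simp add: category_def)

lemma category_comp_hom:
  "category C \<Longrightarrow> f \<in> hom C a b \<Longrightarrow> g \<in> hom C b c \<Longrightarrow> Comp C g f \<in> hom C a c"
  unfolding category_def hom_def by auto

lemma category_comp_id_left: "category C \<Longrightarrow> f \<in> hom C a b \<Longrightarrow> Comp C (Id C b) f = f"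
  unfolding category_def hom_def by auto

lemma category_comp_id_right: "category C \<Longrightarrow> f \<in> hom C a b \<Longrightarrow> Comp C f (Id C a) = f"
  unfolding category_def hom_def by auto

lemma category_hom_obs: "category C \<Longrightarrow> f \<in> hom C a b \<Longrightarrow> a \<in> Ob C \<and> b \<in> Ob C"
  unfolding category_def hom_def by auto

lemma category_comp_assoc:
  "category C \<Longrightarrow> f \<in> Ar C \<Longrightarrow> g \<in> Ar C \<Longrightarrow> h \<in> Ar C \<Longrightarrow>
   Cod C f = Dom C g \<Longrightarrow> Cod C g = Dom C h \<Longrightarrow> Comp C h (Comp C g f) = Comp C (Comp C h g) f"
  unfolding category_def by auto

lemma category_comp_arr:
  "category C \<Longrightarrow> f \<in> Ar C \<Longrightarrow> g \<in> Ar C \<Longrightarrow> Cod C f = Dom C g \<Longrightarrow> Comp C g f \<in> Ar C"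
  unfolding category_def hom_def by auto

lemma category_dom_comp:
  "category C \<Longrightarrow> f \<in> Ar C \<Longrightarrow> g \<in> Ar C \<Longrightarrow> Cod C f = Dom C g \<Longrightarrow> Dom C (Comp C g f) = Dom C f"
  unfolding category_def hom_def by auto

lemma category_cod_comp:
  "category C \<Longrightarrow> f \<in> Ar C \<Longrightarrow> g \<in> Ar C \<Longrightarrow> Cod C f = Dom C g \<Longrightarrow> Cod C (Comp C g f) = Cod C g"
  unfolding category_def hom_def by auto

lemmas category_reassoc = category_comp_assoc category_comp_arr category_dom_comp
  category_cod_comp

lemma mixcat2_simps:
  "Ob (mixcat2 A) = Ob A \<times> Ob A" "Ar (mixcat2 A) = Ar A \<times> Ar A"
  "Dom (mixcat2 A) (f, g) = (Cod A f, Dom A g)" "Cod (mixcat2 A) (f, g) = (Dom A f, Cod A g)"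
  "Id (mixcat2 A) (a, b) = (Id A a, Id A b)"
  "Comp (mixcat2 A) (f', g') (f, g) = (Comp A f f', Comp A g' g)"
  by (simp_all add: mixcat2_def prodcat_def opcat_def)

lemma mixcat4_simps:
  "Ob (mixcat4 A) = Ob A \<times> Ob A \<times> Ob A \<times> Ob A"
  "Ar (mixcat4 A) = Ar A \<times> Ar A \<times> Ar A \<times> Ar A"
  "Dom (mixcat4 A) (f1, f2, f3, f4) = (Dom A f1, Cod A f2, Cod A f3, Dom A f4)"
  "Cod (mixcat4 A) (f1, f2, f3, f4) = (Cod A f1, Dom A f2, Dom A f3, Cod A f4)"
  "Id (mixcat4 A) (a, b, c, d) = (Id A a, Id A b, Id A c, Id A d)"
  "Comp (mixcat4 A) (g1, g2, g3, g4) (f1, f2, f3, f4) =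
     (Comp A g1 f1, Comp A f2 g2, Comp A f3 g3, Comp A g4 f4)"
  by (simp_all add: mixcat4_def prodcat_def opcat_def)

lemma functor_mixcat2_ob:
  "functor (mixcat2 A) B Fo Fa \<Longrightarrow> a \<in> Ob A \<Longrightarrow> b \<in> Ob A \<Longrightarrow> Fo (a, b) \<in> Ob B"
  unfolding functor_def mixcat2_simps by auto

lemma functor_mixcat2_hom:
  "functor (mixcat2 A) B Fo Fa \<Longrightarrow> f \<in> hom A a a' \<Longrightarrow> g \<in> hom A b b' \<Longrightarrow>
   Fa (f, g) \<in> hom B (Fo (a', b)) (Fo (a, b'))"
  unfolding functor_def by (auto simp: mixcat2_simps hom_def)

lemma functor_mixcat2_id:
  "functor (mixcat2 A) B Fo Fa \<Longrightarrow> a \<in> Ob A \<Longrightarrow> b \<in> Ob A \<Longrightarrow>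
   Fa (Id A a, Id A b) = Id B (Fo (a, b))"
  unfolding functor_def by (auto simp: mixcat2_simps)

lemma functor_mixcat2_comp:
  assumes "functor (mixcat2 A) B Fo Fa"
    and "g1 \<in> hom A p q" "f1 \<in> hom A q r" "f2 \<in> hom A s t" "g2 \<in> hom A t w"
  shows "Fa (Comp A f1 g1, Comp A g2 f2) = Comp B (Fa (g1, g2)) (Fa (f1, f2))"
proof -
  have "Fa (Comp (mixcat2 A) (g1, g2) (f1, f2)) = Comp B (Fa (g1, g2)) (Fa (f1, f2))"
    using assms unfolding functor_def by (auto simp: mixcat2_simps hom_def)
  then show ?thesis by (simp add: mixcat2_simps)
qed

lemma functor_mixcat2_split:
  assumes A: "category A" and F: "functor (mixcat2 A) B Fo Fa"
    and f: "f \<in> hom A a a'" and g: "g \<in> hom A b b'"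
  shows "Fa (f, g) = Comp B (Fa (Id A a, g)) (Fa (f, Id A b))"
    and "Fa (f, g) = Comp B (Fa (f, Id A b')) (Fa (Id A a', g))"
proof -
  have ids: "Id A a \<in> hom A a a" "Id A a' \<in> hom A a' a'" "Id A b \<in> hom A b b" "Id A b' \<in> hom A b' b'"
    using category_hom_obs[OF A f] category_hom_obs[OF A g] category_id_hom[OF A] by auto
  show "Fa (f, g) = Comp B (Fa (Id A a, g)) (Fa (f, Id A b))"
    using functor_mixcat2_comp[OF F ids(1) f ids(3) g]
    by (simp add: category_comp_id_right[OF A f] category_comp_id_right[OF A g])
  show "Fa (f, g) = Comp B (Fa (f, Id A b')) (Fa (Id A a', g))"
    using functor_mixcat2_comp[OF F f ids(2) g ids(4)]
    by (simp add: category_comp_id_left[OF A f] category_comp_id_left[OF A g])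
qed

lemma functor_mix:
  assumes F: "functor (mixcat2 A) B Fo Fa" and G: "functor (mixcat2 A) B Go Ga"
    and H: "functor (mixcat2 B) C Ho Ha"
  shows "functor (mixcat4 A) C (mix_ob Ho Go Fo) (mix_ar Ha Ga Fa)"
  unfolding functor_def
proof (intro conjI ballI impI)
  fix x assume "x \<in> Ob (mixcat4 A)"
  then show "mix_ob Ho Go Fo x \<in> Ob C"
    by (auto simp: mixcat4_simps mix_ob_def
        intro!: functor_mixcat2_ob[OF H] functor_mixcat2_ob[OF G] functor_mixcat2_ob[OF F])
next
  fix x assume "x \<in> Ob (mixcat4 A)"
  then obtain a b c d where x: "x = (a, b, c, d)"
    and obs: "a \<in> Ob A" "b \<in> Ob A" "c \<in> Ob A" "d \<in> Ob A"
    by (auto simp: mixcat4_simps)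
  show "mix_ar Ha Ga Fa (Id (mixcat4 A) x) = Id C (mix_ob Ho Go Fo x)"
    using obs by (simp add: x mixcat4_simps mix_ar_def mix_ob_def functor_mixcat2_id[OF G]
        functor_mixcat2_id[OF F] functor_mixcat2_id[OF H] functor_mixcat2_ob[OF G]
        functor_mixcat2_ob[OF F])
next
  fix x assume "x \<in> Ar (mixcat4 A)"
  then obtain f1 f2 f3 f4 where x: "x = (f1, f2, f3, f4)"
    and "f1 \<in> Ar A" "f2 \<in> Ar A" "f3 \<in> Ar A" "f4 \<in> Ar A"
    by (auto simp: mixcat4_simps)
  then have "f1 \<in> hom A (Dom A f1) (Cod A f1)" "f2 \<in> hom A (Dom A f2) (Cod A f2)"
    "f3 \<in> hom A (Dom A f3) (Cod A f3)" "f4 \<in> hom A (Dom A f4) (Cod A f4)"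
    by (auto simp: hom_def)
  then show "mix_ar Ha Ga Fa x \<in>
      hom C (mix_ob Ho Go Fo (Dom (mixcat4 A) x)) (mix_ob Ho Go Fo (Cod (mixcat4 A) x))"
    by (simp add: x mixcat4_simps mix_ar_def mix_ob_def functor_mixcat2_hom[OF H]
        functor_mixcat2_hom[OF G] functor_mixcat2_hom[OF F])
next
  fix x y assume "x \<in> Ar (mixcat4 A)" "y \<in> Ar (mixcat4 A)"
    and xy: "Cod (mixcat4 A) x = Dom (mixcat4 A) y"
  then obtain f1 f2 f3 f4 g1 g2 g3 g4 where x: "x = (f1, f2, f3, f4)" and y: "y = (g1, g2, g3, g4)"
    and "f1 \<in> Ar A" "f2 \<in> Ar A" "f3 \<in> Ar A" "f4 \<in> Ar A"
      "g1 \<in> Ar A" "g2 \<in> Ar A" "g3 \<in> Ar A" "g4 \<in> Ar A"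
    by (auto simp: mixcat4_simps)
  moreover have "Cod A f1 = Dom A g1" "Dom A f2 = Cod A g2" "Dom A f3 = Cod A g3"
    "Cod A f4 = Dom A g4"
    using xy by (auto simp: x y mixcat4_simps)
  ultimately have h: "f1 \<in> hom A (Dom A f1) (Cod A f1)" "f2 \<in> hom A (Cod A g2) (Cod A f2)"
    "f3 \<in> hom A (Cod A g3) (Cod A f3)" "f4 \<in> hom A (Dom A f4) (Dom A g4)"
    "g1 \<in> hom A (Cod A f1) (Cod A g1)" "g2 \<in> hom A (Dom A g2) (Cod A g2)"
    "g3 \<in> hom A (Dom A g3) (Cod A g3)" "g4 \<in> hom A (Dom A g4) (Cod A g4)"
    by (auto simp: hom_def)
  show "mix_ar Ha Ga Fa (Comp (mixcat4 A) y x) = Comp C (mix_ar Ha Ga Fa y) (mix_ar Ha Ga Fa x)"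
    by (simp add: x y mixcat4_simps mix_ar_def functor_mixcat2_comp[OF G h(1,5,6,2)]
        functor_mixcat2_comp[OF F h(7,3,4,8)]
        functor_mixcat2_comp[OF H functor_mixcat2_hom[OF G h(5,6)] functor_mixcat2_hom[OF G h(1,2)]
          functor_mixcat2_hom[OF F h(3,4)] functor_mixcat2_hom[OF F h(7,8)]])
qed

definition dinat_along ::
  "('b, 'g) cat \<Rightarrow> ('c, 'h) cat \<Rightarrow> ('g \<times> 'g \<Rightarrow> 'h) \<Rightarrow> ('g \<times> 'g \<Rightarrow> 'h) \<Rightarrow> ('b \<Rightarrow> 'h) \<Rightarrow> 'g \<Rightarrow> 'h"
  where "dinat_along B C Ha Ka \<psi> p =
    Comp C (Ka (Id B (Dom B p), p)) (Comp C (\<psi> (Dom B p)) (Ha (p, Id B (Dom B p))))"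

lemma hcomp_eq_dinat_along:
  "Dom B (\<phi> a) = Fo (a, a) \<Longrightarrow> hcomp B C Fo Ha Ka \<phi> \<psi> a = dinat_along B C Ha Ka \<psi> (\<phi> a)"
  by (simp add: hcomp_def dinat_along_def)

lemma dinat2_component_hom:
  "dinat2 A B Fo Fa Go Ga \<phi> \<Longrightarrow> a \<in> Ob A \<Longrightarrow> \<phi> a \<in> hom B (Fo (a, a)) (Go (a, a))"
  unfolding dinat2_def by auto

lemma dinat2_hexagon:
  assumes "dinat2 A B Fo Fa Go Ga \<phi>" and "f \<in> hom A a a'"
  shows "Comp B (Ga (Id A a, f)) (Comp B (\<phi> a) (Fa (f, Id A a))) =
    Comp B (Ga (f, Id A a')) (Comp B (\<phi> a') (Fa (Id A a', f)))"
  using assms unfolding dinat2_def hom_def Let_def by auto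

lemma dinat_along_hom:
  assumes B: "category B" and C: "category C"
    and H: "functor (mixcat2 B) C Ho Ha" and K: "functor (mixcat2 B) C Ko Ka"
    and \<psi>: "dinat2 B C Ho Ha Ko Ka \<psi>" and p: "p \<in> hom B y g"
  shows "dinat_along B C Ha Ka \<psi> p \<in> hom C (Ho (g, y)) (Ko (y, g))"
proof -
  have y: "Dom B p = y" "Id B y \<in> hom B y y"
    using p category_hom_obs[OF B p] category_id_hom[OF B] by (auto simp: hom_def)
  have "\<psi> y \<in> hom C (Ho (y, y)) (Ko (y, y))"
    using dinat2_component_hom[OF \<psi>] category_hom_obs[OF B p] by blast
  then show ?thesis
    unfolding dinat_along_def y(1)
    by (intro category_comp_hom[OF C functor_mixcat2_hom[OF H p y(2)]]
        category_comp_hom[OF C _ functor_mixcat2_hom[OF K y(2) p]])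
qed

lemma dinat_along_postcomp:
  assumes B: "category B" and C: "category C"
    and H: "functor (mixcat2 B) C Ho Ha" and K: "functor (mixcat2 B) C Ko Ka"
    and \<psi>: "dinat2 B C Ho Ha Ko Ka \<psi>" and p: "p \<in> hom B y g" and v: "v \<in> hom B g z"
  shows "Comp C (Ka (Id B y, v)) (Comp C (dinat_along B C Ha Ka \<psi> p) (Ha (v, Id B y))) =
    dinat_along B C Ha Ka \<psi> (Comp B v p)"
proof -
  have y: "y \<in> Ob B" "Id B y \<in> hom B y y"
    using category_hom_obs[OF B p] category_id_hom[OF B] by auto
  have doms: "Dom B p = y" "Dom B (Comp B v p) = y"
    using p category_comp_hom[OF B p v] by (auto simp: hom_def)
  have homs: "Ka (Id B y, v) \<in> hom C (Ko (y, g)) (Ko (y, z))"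
    "Ka (Id B y, p) \<in> hom C (Ko (y, y)) (Ko (y, g))"
    "\<psi> y \<in> hom C (Ho (y, y)) (Ko (y, y))"
    "Ha (p, Id B y) \<in> hom C (Ho (g, y)) (Ho (y, y))"
    "Ha (v, Id B y) \<in> hom C (Ho (z, y)) (Ho (g, y))"
    using functor_mixcat2_hom[OF K y(2) v] functor_mixcat2_hom[OF K y(2) p]
      dinat2_component_hom[OF \<psi> y(1)] functor_mixcat2_hom[OF H p y(2)]
      functor_mixcat2_hom[OF H v y(2)] by auto
  have K_comp: "Comp C (Ka (Id B y, v)) (Ka (Id B y, p)) = Ka (Id B y, Comp B v p)"
    using functor_mixcat2_comp[OF K y(2) y(2) p v] category_comp_id_left[OF B y(2)] by simp
  have H_comp: "Comp C (Ha (p, Id B y)) (Ha (v, Id B y)) = Ha (Comp B v p, Id B y)"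
    using functor_mixcat2_comp[OF H p v y(2) y(2)] category_comp_id_left[OF B y(2)] by simp
  have "Comp C (Ka (Id B y, v)) (Comp C (dinat_along B C Ha Ka \<psi> p) (Ha (v, Id B y))) =
      Comp C (Comp C (Ka (Id B y, v)) (Ka (Id B y, p)))
        (Comp C (\<psi> y) (Comp C (Ha (p, Id B y)) (Ha (v, Id B y))))"
    using homs unfolding dinat_along_def doms by (simp add: hom_def category_reassoc[OF C])
  also have "\<dots> = dinat_along B C Ha Ka \<psi> (Comp B v p)"
    unfolding K_comp H_comp dinat_along_def doms ..
  finally show ?thesis .
qed

lemma dinat_along_precomp:
  assumes B: "category B" and C: "category C"
    and H: "functor (mixcat2 B) C Ho Ha" and K: "functor (mixcat2 B) C Ko Ka"
    and \<psi>: "dinat2 B C Ho Ha Ko Ka \<psi>" and u: "u \<in> hom B x y" and p: "p \<in> hom B y g"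
  shows "Comp C (Ka (u, Id B g)) (Comp C (dinat_along B C Ha Ka \<psi> p) (Ha (Id B g, u))) =
    dinat_along B C Ha Ka \<psi> (Comp B p u)"
proof -
  have obs: "x \<in> Ob B" "y \<in> Ob B" "g \<in> Ob B"
    using category_hom_obs[OF B u] category_hom_obs[OF B p] by auto
  have ids: "Id B x \<in> hom B x x" "Id B y \<in> hom B y y" "Id B g \<in> hom B g g"
    using obs category_id_hom[OF B] by auto
  have doms: "Dom B p = y" "Dom B (Comp B p u) = x"
    using p category_comp_hom[OF B u p] by (auto simp: hom_def)
  have homs: "Ka (u, Id B g) \<in> hom C (Ko (y, g)) (Ko (x, g))"
    "Ka (Id B x, p) \<in> hom C (Ko (x, y)) (Ko (x, g))"
    "Ka (Id B y, p) \<in> hom C (Ko (y, y)) (Ko (y, g))"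
    "Ha (p, Id B y) \<in> hom C (Ho (g, y)) (Ho (y, y))"
    "Ka (u, Id B y) \<in> hom C (Ko (y, y)) (Ko (x, y))"
    "Ka (Id B x, u) \<in> hom C (Ko (x, x)) (Ko (x, y))"
    "\<psi> x \<in> hom C (Ho (x, x)) (Ko (x, x))" "\<psi> y \<in> hom C (Ho (y, y)) (Ko (y, y))"
    "Ha (Id B g, u) \<in> hom C (Ho (g, x)) (Ho (g, y))"
    "Ha (p, Id B x) \<in> hom C (Ho (g, x)) (Ho (y, x))"
    "Ha (Id B y, u) \<in> hom C (Ho (y, x)) (Ho (y, y))"
    "Ha (u, Id B x) \<in> hom C (Ho (y, x)) (Ho (x, x))"
    using functor_mixcat2_hom[OF K u ids(3)] functor_mixcat2_hom[OF K ids(1) p]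
      functor_mixcat2_hom[OF K ids(2) p] functor_mixcat2_hom[OF H p ids(2)]
      functor_mixcat2_hom[OF K u ids(2)] functor_mixcat2_hom[OF K ids(1) u]
      dinat2_component_hom[OF \<psi> obs(1)] dinat2_component_hom[OF \<psi> obs(2)]
      functor_mixcat2_hom[OF H ids(3) u] functor_mixcat2_hom[OF H p ids(1)]
      functor_mixcat2_hom[OF H ids(2) u] functor_mixcat2_hom[OF H u ids(1)] by auto
  have K_swap: "Comp C (Ka (u, Id B g)) (Ka (Id B y, p)) = Comp C (Ka (Id B x, p)) (Ka (u, Id B y))"
    using functor_mixcat2_split[OF B K u p] by simp
  have H_swap: "Comp C (Ha (p, Id B y)) (Ha (Id B g, u)) = Comp C (Ha (Id B y, u)) (Ha (p, Id B x))"
    using functor_mixcat2_split[OF B H p u] by simp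
  have K_comp: "Comp C (Ka (Id B x, p)) (Ka (Id B x, u)) = Ka (Id B x, Comp B p u)"
    using functor_mixcat2_comp[OF K ids(1) ids(1) u p] category_comp_id_left[OF B ids(1)] by simp
  have H_comp: "Comp C (Ha (u, Id B x)) (Ha (p, Id B x)) = Ha (Comp B p u, Id B x)"
    using functor_mixcat2_comp[OF H u p ids(1) ids(1)] category_comp_id_left[OF B ids(1)] by simp
  have hexagon: "Comp C (Ka (u, Id B y)) (Comp C (\<psi> y) (Ha (Id B y, u))) =
      Comp C (Ka (Id B x, u)) (Comp C (\<psi> x) (Ha (u, Id B x)))"
    using dinat2_hexagon[OF \<psi> u] by simp
  note reassoc = hom_def category_reassoc[OF C]
  have "Comp C (Ka (u, Id B g)) (Comp C (dinat_along B C Ha Ka \<psi> p) (Ha (Id B g, u))) =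
      Comp C (Comp C (Ka (u, Id B g)) (Ka (Id B y, p)))
        (Comp C (\<psi> y) (Comp C (Ha (p, Id B y)) (Ha (Id B g, u))))"
    using homs unfolding dinat_along_def doms by (simp add: reassoc)
  also have "\<dots> = Comp C (Comp C (Ka (Id B x, p)) (Ka (u, Id B y)))
        (Comp C (\<psi> y) (Comp C (Ha (Id B y, u)) (Ha (p, Id B x))))"
    unfolding K_swap H_swap ..
  also have "\<dots> = Comp C (Ka (Id B x, p))
        (Comp C (Comp C (Ka (u, Id B y)) (Comp C (\<psi> y) (Ha (Id B y, u)))) (Ha (p, Id B x)))"
    using homs by (simp add: reassoc)
  also have "\<dots> = Comp C (Ka (Id B x, p))
        (Comp C (Comp C (Ka (Id B x, u)) (Comp C (\<psi> x) (Ha (u, Id B x)))) (Ha (p, Id B x)))"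
    unfolding hexagon ..
  also have "\<dots> = Comp C (Comp C (Ka (Id B x, p)) (Ka (Id B x, u)))
        (Comp C (\<psi> x) (Comp C (Ha (u, Id B x)) (Ha (p, Id B x))))"
    using homs by (simp add: reassoc)
  also have "\<dots> = dinat_along B C Ha Ka \<psi> (Comp B p u)"
    unfolding K_comp H_comp dinat_along_def doms ..
  finally show ?thesis .
qed

lemma dinat_along_sandwich:
  assumes B: "category B" and C: "category C"
    and H: "functor (mixcat2 B) C Ho Ha" and K: "functor (mixcat2 B) C Ko Ka"
    and \<psi>: "dinat2 B C Ho Ha Ko Ka \<psi>"
    and u: "u \<in> hom B x y" and p: "p \<in> hom B y g" and v: "v \<in> hom B g z"
  shows "Comp C (Ka (u, v)) (Comp C (dinat_along B C Ha Ka \<psi> p) (Ha (v, u))) =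
    dinat_along B C Ha Ka \<psi> (Comp B v (Comp B p u))"
proof -
  note along = dinat_along_hom[OF B C H K \<psi>]
  have vp: "Comp B v p \<in> hom B y z" using category_comp_hom[OF B p v] .
  have homs: "Ka (u, Id B z) \<in> hom C (Ko (y, z)) (Ko (x, z))"
    "Ka (Id B y, v) \<in> hom C (Ko (y, g)) (Ko (y, z))"
    "Ha (v, Id B y) \<in> hom C (Ho (z, y)) (Ho (g, y))"
    "Ha (Id B z, u) \<in> hom C (Ho (z, x)) (Ho (z, y))"
    "dinat_along B C Ha Ka \<psi> p \<in> hom C (Ho (g, y)) (Ko (y, g))"
    using functor_mixcat2_split[OF B K u v] functor_mixcat2_split[OF B H v u]
      category_hom_obs[OF B u] category_hom_obs[OF B v] category_id_hom[OF B]
      functor_mixcat2_hom[OF K] functor_mixcat2_hom[OF H] along[OF p] u v by auto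
  have "Comp C (Ka (u, v)) (Comp C (dinat_along B C Ha Ka \<psi> p) (Ha (v, u))) =
      Comp C (Comp C (Ka (u, Id B z)) (Ka (Id B y, v)))
        (Comp C (dinat_along B C Ha Ka \<psi> p) (Comp C (Ha (v, Id B y)) (Ha (Id B z, u))))"
    using functor_mixcat2_split(2)[OF B K u v] functor_mixcat2_split(2)[OF B H v u] by simp
  also have "\<dots> = Comp C (Ka (u, Id B z)) (Comp C (Comp C (Ka (Id B y, v))
        (Comp C (dinat_along B C Ha Ka \<psi> p) (Ha (v, Id B y)))) (Ha (Id B z, u)))"
    using homs by (simp add: hom_def category_reassoc[OF C])
  also have "\<dots> = dinat_along B C Ha Ka \<psi> (Comp B (Comp B v p) u)"
    unfolding dinat_along_postcomp[OF B C H K \<psi> p v] dinat_along_precomp[OF B C H K \<psi> u vp] ..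
  also have "Comp B (Comp B v p) u = Comp B v (Comp B p u)"
    using u p v by (simp add: hom_def category_reassoc[OF B])
  finally show ?thesis .
qed

lemma dinat4_hcomp:
  assumes A: "category A" and B: "category B" and C: "category C"
    and F: "functor (mixcat2 A) B Fo Fa" and G: "functor (mixcat2 A) B Go Ga"
    and H: "functor (mixcat2 B) C Ho Ha" and K: "functor (mixcat2 B) C Ko Ka"
    and \<phi>: "dinat2 A B Fo Fa Go Ga \<phi>" and \<psi>: "dinat2 B C Ho Ha Ko Ka \<psi>"
  shows "dinat4 A C (mix_ob Ho Go Fo) (mix_ar Ha Ga Fa) (mix_ob Ko Fo Go) (mix_ar Ka Fa Ga)
    (hcomp B C Fo Ha Ka \<phi> \<psi>)"
  unfolding dinat4_def Let_def
proof (intro conjI ballI)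
  fix a assume a: "a \<in> Ob A"
  have "\<phi> a \<in> hom B (Fo (a, a)) (Go (a, a))" using dinat2_component_hom[OF \<phi> a] .
  then show "hcomp B C Fo Ha Ka \<phi> \<psi> a \<in> hom C (mix_ob Ho Go Fo (a, a, a, a)) (mix_ob Ko Fo Go (a, a, a, a))"
    using dinat_along_hom[OF B C H K \<psi>]
    by (simp add: hcomp_eq_dinat_along hom_def mix_ob_def)
next
  fix f assume "f \<in> Ar A"
  then obtain a a' where f: "f \<in> hom A a a'" and a: "a = Dom A f" and a': "a' = Cod A f"
    by (simp add: hom_def)
  have obs: "a \<in> Ob A" "a' \<in> Ob A" and ids: "Id A a \<in> hom A a a" "Id A a' \<in> hom A a' a'"
    using category_hom_obs[OF A f] category_id_hom[OF A] by auto
  have \<phi>a: "\<phi> a \<in> hom B (Fo (a, a)) (Go (a, a))" "\<phi> a' \<in> hom B (Fo (a', a')) (Go (a', a'))"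
    using dinat2_component_hom[OF \<phi>] obs by auto
  note sandwich = dinat_along_sandwich[OF B C H K \<psi>]
  show "Comp C (mix_ar Ka Fa Ga (f, Id A (Dom A f), Id A (Dom A f), f))
      (Comp C (hcomp B C Fo Ha Ka \<phi> \<psi> (Dom A f)) (mix_ar Ha Ga Fa (Id A (Dom A f), f, f, Id A (Dom A f)))) =
    Comp C (mix_ar Ka Fa Ga (Id A (Cod A f), f, f, Id A (Cod A f)))
      (Comp C (hcomp B C Fo Ha Ka \<phi> \<psi> (Cod A f)) (mix_ar Ha Ga Fa (f, Id A (Cod A f), Id A (Cod A f), f)))"
    using \<phi>a unfolding a[symmetric] a'[symmetric] mix_ar_def split
    by (simp add: hom_def hcomp_eq_dinat_along dinat2_hexagon[OF \<phi> f]
        sandwich[OF functor_mixcat2_hom[OF F f ids(1)] \<phi>a(1) functor_mixcat2_hom[OF G ids(1) f]]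
        sandwich[OF functor_mixcat2_hom[OF F ids(2) f] \<phi>a(2) functor_mixcat2_hom[OF G f ids(2)]])
qed

theorem mainTheorem8:
  fixes A :: "('a, 'f) cat" and B :: "('b, 'g) cat" and C :: "('c, 'h) cat"
    and Fo Go :: "'a \<times> 'a \<Rightarrow> 'b" and Fa Ga :: "'f \<times> 'f \<Rightarrow> 'g"
    and Ho Ko :: "'b \<times> 'b \<Rightarrow> 'c" and Ha Ka :: "'g \<times> 'g \<Rightarrow> 'h"
    and \<phi> :: "'a \<Rightarrow> 'g" and \<psi> :: "'b \<Rightarrow> 'h"
  assumes "category A" and "category B" and "category C"
    and "functor (mixcat2 A) B Fo Fa" and "functor (mixcat2 A) B Go Ga"
    and "functor (mixcat2 B) C Ho Ha" and "functor (mixcat2 B) C Ko Ka"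
    and "dinat2 A B Fo Fa Go Ga \<phi>"
    and "dinat2 B C Ho Ha Ko Ka \<psi>"
  shows "functor (mixcat4 A) C (mix_ob Ho Go Fo) (mix_ar Ha Ga Fa)
    \<and> functor (mixcat4 A) C (mix_ob Ko Fo Go) (mix_ar Ka Fa Ga)
    \<and> dinat4 A C (mix_ob Ho Go Fo) (mix_ar Ha Ga Fa) (mix_ob Ko Fo Go) (mix_ar Ka Fa Ga)
        (hcomp B C Fo Ha Ka \<phi> \<psi>)"
  using functor_mix[OF assms(4,5,6)] functor_mix[OF assms(5,4,7)] dinat4_hcomp[OF assms]
  by blast

end
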